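(* Let $k\ge 1$ be an integer and $\sigma$ a permutation of $\mathbb{P}^1(\mathbb{F}_q)$. Let $\mathcal{A}_{\sigma,k}$ be the set of all tuples $(\mu; a_1,\dots,a_k)$ with $a_1,\dots,a_k\in\mathbb{F}_q$ and $\mu\in\mathbb{F}_q(x)$ of degree one such that $$\sigma = \mu(x)\circ x^{q-2}\circ(x-a_k)\circ x^{q-2}\circ(x-a_{k-1})\circ\cdots\circ x^{q-2}\circ(x-a_1),$$ and let $\mathcal{C}_{\sigma,k}$ be the set of all tuples $(\nu; b_1,\dots,b_k)$ with $b_1,\dots,b_k\in\mathbb{F}_q$ and $\nu\in\mathbb{F}_q(x)$ of degree one such that $$\sigma=\nu(x)\circ(b_1,\infty)\circ(b_2,\infty)\circ\cdots\circ(b_k,\infty).$$ Then the map $\mathcal{F}:\mathcal{A}_{\sigma,k}\to\mathcal{C}_{\sigma,k}$, $(\mu;a_1,\dots,a_k)\mapsto(\mu\circ\nu_0;\,F(a_1,\dots,a_k))$ where $\nu_0:=x^{-1}\circ(x-a_k)\circ x^{-1}\circ(x-a_{k-1})\circ\cdots\circ x^{-1}\circ(x-a_1)$, and the map $\mathcal{G}:\mathcal{C}_{\sigma,k}\to\mathcal{A}_{\sigma,k}$, $(\nu;b_1,\dots,b_k)\mapsto(\nu\circ\mu_0;\,a_1,\dots,a_k)$ where $(a_1,\dots,a_k):=G(b_1,\dots,b_k)$ and $\mu_0:=(x+a_1)\circ x^{-1}\circ(x+a_2)\circ x^{-1}\circ\cdots\circ(x+a_k)\circ x^{-1}$, are well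 defined and are mutually inverse bijections. In particular $|\mathcal{A}_{\sigma,k}|=|\mathcal{C}_{\sigma,k}|$.
   Context: Let $q>2$ be a prime power, $\mathbb{F}_q$ the field with $q$ elements, and $\mathbb{P}^1(\mathbb{F}_q)=\mathbb{F}_q\cup\{\infty\}$. A degree-one rational function $\mu(x)=(\alpha x+\beta)/(\gamma x+\delta)\in\mathbb{F}_q(x)$ ($\alpha\delta-\beta\gamma\neq0$) acts as a permutation of $\mathbb{P}^1(\mathbb{F}_q)$ with the usual conventions ($\mu(\infty)=\alpha/\gamma$, or $\infty$ if $\gamma=0$; $\mu(-\delta/\gamma)=\infty$ if $\gamma\ne0$); e.g. $x^{-1}$ swaps $0$ and $\infty$. The monomial $x^{q-2}$ acts on $\mathbb{P}^1(\mathbb{F}_q)$ by fixing $0$ and $\infty$ and sending $c\in\mathbb{F}_q^*$ to $c^{q-2}=c^{-1}$. For $b\in\mathbb{F}_q$, $(b,\infty)$ is the transposition of $\mathbb{P}^1(\mathbb{F}_q)$ swapping $b$ and $\infty$. Composition is $(f\circ g)(x)=f(g(x))$ and all identities are equalities of permutations of $\mathbb{P}^1(\mathbb{F}_q)$. For $c\in\mathbb{F}_q$, $c^{q-2}$ is the field element (so $0^{q-2}=0$). The map $F:\mathbb{F}_q^k\to\mathbb{F}_q^k$ sends $(a_1,\dots,a_k)$ to $(b_1,\dots,b_k)$ where $b_i:=c_{i,i}$, and for each $1\le i\le k$ the elements $c_{i,j}$ ($0\le j\le i$) are defined by $c_{i,0}:=0$ and $c_{i,j}:=c_{i,j-1}^{q-2}+a_{i-j+1}$.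 For $2\le\ell\le k$ let $\Phi_\ell:\mathbb{F}_q^\ell\to\mathbb{F}_q^{\ell-1}$ send $(e_1,\dots,e_\ell)$ to $((e_2-e_1)^{q-2},(e_3-e_1)^{q-2},\dots,(e_\ell-e_1)^{q-2})$. The map $G:\mathbb{F}_q^k\to\mathbb{F}_q^k$ sends $(b_1,\dots,b_k)$ to $(a_1,\dots,a_k)$ where $a_i$ is the first entry of $\Phi_{k-i+2}\circ\Phi_{k-i+3}\circ\cdots\circ\Phi_k(b_1,\dots,b_k)\in\mathbb{F}_q^{k-i+1}$ (for $i=1$ this composite is the identity, so $a_1=b_1$). *)

theory Defs
  imports "HOL-Library.Cardinality"
begin

text \<open>The finite field F_q is a type 'a :: {field, finite}; q = CARD('a).
  The projective line P^1(F_q) is 'a option, with None playing the role of infinity.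
  A degree-one rational function is identified with the permutation of P^1(F_q) it
  induces (this identification is injective, since a Moebius map fixing 0, 1, infinity
  is the identity).\<close>

definition mob :: "'a::field \<Rightarrow> 'a \<Rightarrow> 'a \<Rightarrow> 'a \<Rightarrow> 'a option \<Rightarrow> 'a option" where
  "mob \<alpha> \<beta> \<gamma> \<delta> z = (case z of
      None \<Rightarrow> (if \<gamma> = 0 then None else Some (\<alpha> / \<gamma>))
    | Some x \<Rightarrow> (if \<gamma> * x + \<delta> = 0 then None else Some ((\<alpha> * x + \<beta>) / (\<gamma> * x + \<delta>))))"

definition deg1 :: "('a::field option \<Rightarrow> 'a option) \<Rightarrow> bool" where
  "deg1 \<mu> \<longleftrightarrow> (\<exists>\<alpha> \<beta> \<gamma> \<delta>. \<alpha> * \<delta> - \<beta> * \<gamma> \<noteq> 0 \<and> \<mu> = mob \<alpha> \<beta> \<gamma> \<delta>)"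

definition xqm2 :: "'a::{field,finite} option \<Rightarrow> 'a option" where
  "xqm2 z = map_option (\<lambda>c. c ^ (CARD('a) - 2)) z"

definition xminus :: "'a::field \<Rightarrow> 'a option \<Rightarrow> 'a option" where
  "xminus a = mob 1 (- a) 0 1"

definition xplus :: "'a::field \<Rightarrow> 'a option \<Rightarrow> 'a option" where
  "xplus a = mob 1 a 0 1"

definition xinv :: "'a::field option \<Rightarrow> 'a option" where
  "xinv = mob 0 1 1 0"

definition trinf :: "'a \<Rightarrow> 'a option \<Rightarrow> 'a option" where
  "trinf b z = (if z = Some b then None else if z = None then Some b else z)"

definition chainA :: "'a::{field,finite} list \<Rightarrow> 'a option \<Rightarrow> 'a option" where
  "chainA as = fold (\<lambda>a g. xqm2 \<circ> xminus a \<circ> g) as id"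

definition nu0 :: "'a::field list \<Rightarrow> 'a option \<Rightarrow> 'a option" where
  "nu0 as = fold (\<lambda>a g. xinv \<circ> xminus a \<circ> g) as id"

definition chainC :: "'a list \<Rightarrow> 'a option \<Rightarrow> 'a option" where
  "chainC bs = foldr (\<lambda>b g. trinf b \<circ> g) bs id"

definition mu0 :: "'a::field list \<Rightarrow> 'a option \<Rightarrow> 'a option" where
  "mu0 as = foldr (\<lambda>a g. xplus a \<circ> xinv \<circ> g) as id"

text \<open>c_{i,j} (1-based indices; as ! (m-1) = a_m):
  c_{i,0} = 0, c_{i,j} = c_{i,j-1}^(q-2) + a_{i-j+1}.\<close>
fun cF :: "'a::{field,finite} list \<Rightarrow> nat \<Rightarrow> nat \<Rightarrow> 'a" where
  "cF as i 0 = 0"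
| "cF as i (Suc j) = (cF as i j) ^ (CARD('a) - 2) + as ! (i - Suc j)"

definition Fmap :: "'a::{field,finite} list \<Rightarrow> 'a list" where
  "Fmap as = map (\<lambda>i. cF as i i) [1..<length as + 1]"

fun Phi :: "'a::{field,finite} list \<Rightarrow> 'a list" where
  "Phi [] = []"
| "Phi (e # es) = map (\<lambda>x. (x - e) ^ (CARD('a) - 2)) es"

definition Gmap :: "'a::{field,finite} list \<Rightarrow> 'a list" where
  "Gmap bs = map (\<lambda>i. hd ((Phi ^^ (i - 1)) bs)) [1..<length bs + 1]"

definition setA :: "('a::{field,finite} option \<Rightarrow> 'a option) \<Rightarrow> nat
    \<Rightarrow> (('a option \<Rightarrow> 'a option) \<times> 'a list) set" where
  "setA \<sigma> k = {(\<mu>, as). deg1 \<mu> \<and> length as = k \<and> \<sigma> = \<mu> \<circ> chainA as}"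

definition setC :: "('a::{field,finite} option \<Rightarrow> 'a option) \<Rightarrow> nat
    \<Rightarrow> (('a option \<Rightarrow> 'a option) \<times> 'a list) set" where
  "setC \<sigma> k = {(\<nu>, bs). deg1 \<nu> \<and> length bs = k \<and> \<sigma> = \<nu> \<circ> chainC bs}"

definition calF :: "('a::{field,finite} option \<Rightarrow> 'a option) \<times> 'a list
    \<Rightarrow> ('a option \<Rightarrow> 'a option) \<times> 'a list" where
  "calF p = (case p of (\<mu>, as) \<Rightarrow> (\<mu> \<circ> nu0 as, Fmap as))"

definition calG :: "('a::{field,finite} option \<Rightarrow> 'a option) \<times> 'a list
    \<Rightarrow> ('a option \<Rightarrow> 'a option) \<times> 'a list" where
  "calG p = (case p of (\<nu>, bs) \<Rightarrow> (\<nu> \<circ> mu0 (Gmap bs), Gmap bs))"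

end

theory Submission
  imports Defs
begin

text \<open>On F_q we have c^(q-2) = c^(-1), so the monomial x^(q-2) differs from x^(-1) only
  by swapping 0 and \<infinity>; hence x^(q-2) o (x - a) = x^(-1) o (x - a) o (a, \<infinity>).
  Moving these transpositions to the right through the injective maps fixing \<infinity> conjugates
  (a_i, \<infinity>) into (b_i, \<infinity>), where b_i is the preimage of a_i, namely the continued fraction
  a_1 + 1/(a_2 + ... + 1/a_i). Hence x^(q-2) o (x - a_k) o ... o x^(q-2) o (x - a_1) equals
  nu_0 o (b_1, \<infinity>) o ... o (b_k, \<infinity>) with (b_1, ..., b_k) = F(a_1, ..., a_k), and mu_0 inverts
  nu_0. Each Phi strips the leading partial quotient off all continued fractions, so G undoes F;
  F is then an injective self-map of the finite set F_q^k, hence bijective with inverse G.\<close>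

lemma power_card_minus_one_eq_1:
  fixes c :: "'a::{field,finite}"
  assumes "c \<noteq> 0"
  shows "c ^ (CARD('a) - 1) = 1"
proof -
  let ?U = "UNIV - {0::'a}"
  have "bij_betw ((*) c) ?U ?U"
  proof (rule bij_betw_byWitness[where f' = "\<lambda>y. y / c"])
  qed (use assms in auto)
  then have "prod id ?U = prod (\<lambda>x. c * x) ?U"
    using prod.reindex_bij_betw[of "(*) c" ?U ?U id] by simp
  also have "\<dots> = c ^ card ?U * prod id ?U"
    by (simp add: prod.distrib)
  finally have "c ^ card ?U = 1"
    by (metis mult_cancel_right1 prod_zero_iff finite DiffE singletonI id_apply)
  then show ?thesis
    by (simp add: card_Diff_singleton)
qed

lemma power_card_minus_two_eq_inverse:
  fixes c :: "'a::{field,finite}"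
  assumes "CARD('a) > 2"
  shows "c ^ (CARD('a) - 2) = inverse c"
proof (cases "c = 0")
  case False
  have "CARD('a) - 1 = Suc (CARD('a) - 2)"
    using assms by simp
  then have "c ^ (CARD('a) - 2) * c = 1"
    using power_card_minus_one_eq_1[OF False] by (metis power_Suc2)
  then show ?thesis
    using False by (simp add: field_simps)
qed (use assms in simp)

lemma mob_comp:
  fixes a b c d a' b' c' d' :: "'a::field"
  assumes "a' * d' - b' * c' \<noteq> 0"
  shows "mob a b c d \<circ> mob a' b' c' d'
    = mob (a*a' + b*c') (a*b' + b*d') (c*a' + d*c') (c*b' + d*d')"
proof
  fix z
  show "(mob a b c d \<circ> mob a' b' c' d') z
      = mob (a*a' + b*c') (a*b' + b*d') (c*a' + d*c') (c*b' + d*d') z"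
  proof (cases z)
    case None
    show ?thesis
    proof (cases "c' = 0")
      case True
      then have "a' \<noteq> 0"
        using assms by auto
      then show ?thesis
        using None True by (simp add: mob_def)
    next
      case False
      have "c*a' + d*c' = c' * (c * (a'/c') + d)" "a*a' + b*c' = c' * (a * (a'/c') + b)"
        using False by (simp_all add: field_simps)
      then show ?thesis
        using None False by (simp add: mob_def)
    qed
  next
    case (Some x)
    have num: "(a*a' + b*c')*x + (a*b' + b*d') = a*(a'*x + b') + b*(c'*x + d')"
      and den: "(c*a' + d*c')*x + (c*b' + d*d') = c*(a'*x + b') + d*(c'*x + d')"
      by (simp_all add: algebra_simps)
    show ?thesis
    proof (cases "c'*x + d' = 0")
      case True
      \<comment> \<open>a pole of the inner map is not a zero of it\<close>
      have "a'*x + b' \<noteq> 0"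
      proof
        assume "a'*x + b' = 0"
        moreover have "a'*d' - b'*c' = a'*(c'*x + d') - c'*(a'*x + b')"
          by (simp add: algebra_simps)
        ultimately show False
          using True assms by simp
      qed
      then show ?thesis
        using Some True by (simp add: mob_def num den)
    next
      case False
      define y where "y = (a'*x + b') / (c'*x + d')"
      have y: "a'*x + b' = (c'*x + d') * y"
        using False by (simp add: y_def)
      have "(c*a' + d*c')*x + (c*b' + d*d') = (c'*x + d')*(c*y + d)"
        and "(a*a' + b*c')*x + (a*b' + b*d') = (c'*x + d')*(a*y + b)"
        unfolding num den y by (simp_all add: algebra_simps)
      then show ?thesis
        using Some False by (simp add: mob_def y_def[symmetric])
    qed
  qed
qed

lemma deg1_comp:
  assumes "deg1 f" "deg1 g"
  shows "deg1 (f \<circ> g)"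
proof -
  obtain a b c d a' b' c' d' where
    det: "a*d - b*c \<noteq> 0" "a'*d' - b'*c' \<noteq> 0" and fg: "f = mob a b c d" "g = mob a' b' c' d'"
    using assms unfolding deg1_def by blast
  have "(a*a' + b*c')*(c*b' + d*d') - (a*b' + b*d')*(c*a' + d*c')
      = (a*d - b*c)*(a'*d' - b'*c')"
    by (simp add: algebra_simps)
  then have "(a*a' + b*c')*(c*b' + d*d') - (a*b' + b*d')*(c*a' + d*c') \<noteq> 0"
    using det by simp
  moreover have "f \<circ> g = mob (a*a' + b*c') (a*b' + b*d') (c*a' + d*c') (c*b' + d*d')"
    unfolding fg using det(2) by (rule mob_comp)
  ultimately show ?thesis
    unfolding deg1_def by blast
qed

lemma deg1_id: "deg1 id"
proof -
  have "mob 1 0 0 1 = id"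
    by (rule ext) (simp add: mob_def split: option.split)
  then show ?thesis
    unfolding deg1_def by (metis diff_zero mult_1 mult_zero_left one_neq_zero)
qed

lemma deg1_xinv: "deg1 xinv"
  unfolding deg1_def xinv_def by (intro exI[of _ 0] exI[of _ 1]) simp

lemma deg1_xminus: "deg1 (xminus a)"
  unfolding deg1_def xminus_def by (intro exI[of _ 1] exI[of _ "-a"] exI[of _ 0]) simp

lemma deg1_xplus: "deg1 (xplus a)"
  unfolding deg1_def xplus_def by (intro exI[of _ 1] exI[of _ a] exI[of _ 0]) simp

lemma xinv_xinv [simp]: "xinv (xinv z) = z"
  by (cases z) (auto simp: xinv_def mob_def)

lemma xminus_xplus [simp]: "xminus a (xplus a z) = z"
  by (cases z) (auto simp: xminus_def xplus_def mob_def)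

lemma xplus_xminus [simp]: "xplus a (xminus a z) = z"
  by (cases z) (auto simp: xminus_def xplus_def mob_def)

lemma fold_comp_eq_comp:
  "fold (\<lambda>x g. h x \<circ> g) xs g = fold (\<lambda>x g. h x \<circ> g) xs id \<circ> g"
  for g :: "'a \<Rightarrow> 'a"
proof (induction xs arbitrary: g)
  case (Cons x xs)
  let ?f = "fold (\<lambda>x g. h x \<circ> g)"
  have "?f (x # xs) g = ?f xs (h x \<circ> g)"
    by (simp only: fold_Cons comp_apply)
  also have "\<dots> = ?f xs id \<circ> (h x \<circ> id) \<circ> g"
    by (simp only: Cons.IH[of "h x \<circ> g"] comp_id comp_assoc)
  also have "?f xs id \<circ> (h x \<circ> id) = ?f xs (h x \<circ> id)"
    by (rule Cons.IH[of "h x \<circ> id", symmetric])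
  also have "\<dots> = ?f (x # xs) id"
    by (simp only: fold_Cons comp_apply)
  finally show ?case .
qed simp

lemma foldr_comp_eq_comp:
  "foldr (\<lambda>x g. h x \<circ> g) xs g = foldr (\<lambda>x g. h x \<circ> g) xs id \<circ> g"
  by (induction xs) (simp_all add: comp_assoc)

lemma nu0_Cons: "nu0 (a # as) = nu0 as \<circ> (xinv \<circ> xminus a)"
proof -
  have "nu0 (a # as) = fold (\<lambda>a g. (xinv \<circ> xminus a) \<circ> g) as ((xinv \<circ> xminus a) \<circ> id)"
    unfolding nu0_def by (simp only: fold_Cons comp_apply)
  also have "\<dots> = nu0 as \<circ> ((xinv \<circ> xminus a) \<circ> id)"
    unfolding nu0_def by (rule fold_comp_eq_comp)
  finally show ?thesis by simp
qed

lemma nu0_snoc: "nu0 (as @ [a]) = xinv \<circ> xminus a \<circ> nu0 as"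
  unfolding nu0_def by simp

lemma mu0_Cons: "mu0 (a # as) = xplus a \<circ> xinv \<circ> mu0 as"
  unfolding mu0_def by simp

lemma chainA_snoc: "chainA (as @ [a]) = xqm2 \<circ> xminus a \<circ> chainA as"
  unfolding chainA_def by simp

lemma chainC_snoc: "chainC (bs @ [b]) = chainC bs \<circ> trinf b"
  unfolding chainC_def using foldr_comp_eq_comp[of trinf bs "trinf b"] by simp

lemma nu0_comp_mu0: "nu0 as \<circ> mu0 as = id"
proof (induction as)
  case (Cons a as)
  have "nu0 (a # as) \<circ> mu0 (a # as) = nu0 as \<circ> (xinv \<circ> xminus a \<circ> xplus a \<circ> xinv) \<circ> mu0 as"
    by (simp only: nu0_Cons mu0_Cons comp_assoc)
  also have "xinv \<circ> xminus a \<circ> xplus a \<circ> xinv = id"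
    by (simp add: fun_eq_iff)
  finally show ?case
    using Cons.IH by simp
qed (simp add: nu0_def mu0_def)

lemma mu0_comp_nu0: "mu0 as \<circ> nu0 as = id"
proof (induction as)
  case (Cons a as)
  have "mu0 (a # as) \<circ> nu0 (a # as) = xplus a \<circ> xinv \<circ> (mu0 as \<circ> nu0 as) \<circ> xinv \<circ> xminus a"
    by (simp only: nu0_Cons mu0_Cons comp_assoc)
  with Cons.IH show ?case
    by (simp add: fun_eq_iff)
qed (simp add: nu0_def mu0_def)

lemma deg1_nu0: "deg1 (nu0 as)"
proof (induction as rule: rev_induct)
  case (snoc a as)
  then show ?case
    unfolding nu0_snoc by (intro deg1_comp deg1_xinv deg1_xminus)
qed (simp add: nu0_def deg1_id[unfolded id_def])

lemma deg1_mu0: "deg1 (mu0 as)"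
proof (induction as)
  case (Cons a as)
  then show ?case
    unfolding mu0_Cons by (intro deg1_comp deg1_xinv deg1_xplus)
qed (simp add: mu0_def deg1_id[unfolded id_def])

lemma trinf_comp_conj:
  assumes "inj K" "K (Some b) = Some a" "K None = None"
  shows "trinf a \<circ> K = K \<circ> trinf b"
proof
  fix z
  show "(trinf a \<circ> K) z = (K \<circ> trinf b) z"
  proof (cases "z = Some b \<or> z = None")
    case False
    then have "K z \<noteq> Some a" "K z \<noteq> None"
      using assms by (metis injD)+
    then have "trinf a (K z) = K z"
      by (simp add: trinf_def)
    moreover have "trinf b z = z"
      using False by (simp add: trinf_def)
    ultimately show ?thesis
      by simp
  qed (use assms in \<open>auto simp: trinf_def\<close>)
qed

text \<open>The continued fraction x_1 + 1/(x_2 + ... + 1/x_j); by cF_eq_cfrac, the i-th entry of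
  F(a_1, ..., a_k) is cfrac [a_1, ..., a_i].\<close>

definition cfrac :: "'a::{field,finite} list \<Rightarrow> 'a" where
  "cfrac xs = foldr (\<lambda>x v. x + v ^ (CARD('a) - 2)) xs 0"

lemma cfrac_Nil [simp]: "cfrac [] = 0"
  by (simp add: cfrac_def)

lemma cfrac_Cons [simp]: "cfrac (x # xs) = x + cfrac xs ^ (CARD('a) - 2)"
  for x :: "'a::{field,finite}"
  by (simp add: cfrac_def)

lemma cF_eq_cfrac:
  assumes "j \<le> i" "i \<le> length as"
  shows "cF as i j = cfrac (take j (drop (i - j) as))"
  using assms
proof (induction j)
  case (Suc j)
  have "i - Suc j < length as"
    using Suc.prems by simp
  then have "drop (i - Suc j) as = as ! (i - Suc j) # drop (i - j) as"
    using Suc.prems by (metis Cons_nth_drop_Suc Suc_diff_Suc Suc_le_lessD)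
  then show ?case
    using Suc by (simp add: add.commute)
qed simp

lemma Fmap_eq_cfrac_prefixes: "Fmap as = map (\<lambda>i. cfrac (take (Suc i) as)) [0..<length as]"
  by (rule nth_equalityI) (simp_all del: upt_Suc cF.simps add: Fmap_def cF_eq_cfrac)

lemma length_Fmap [simp]: "length (Fmap as) = length as"
  by (simp del: upt_Suc add: Fmap_def)

lemma Fmap_snoc: "Fmap (as @ [a]) = Fmap as @ [cfrac (as @ [a])]"
  by (rule nth_equalityI) (auto simp del: upt_Suc simp: Fmap_eq_cfrac_prefixes nth_append)

lemma Fmap_Cons: "Fmap (a # as) = cfrac [a] # map (\<lambda>i. cfrac (a # take (Suc i) as)) [0..<length as]"
  by (rule nth_equalityI) (auto simp del: upt_Suc simp: Fmap_eq_cfrac_prefixes nth_Cons')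

context
  assumes card_gt_2: "CARD('a::{field,finite}) > 2"
begin

declare power_card_minus_two_eq_inverse[OF card_gt_2, simp]

lemma xqm2_eq_map_inverse: "xqm2 = map_option (inverse :: 'a \<Rightarrow> 'a)"
  by (simp add: fun_eq_iff xqm2_def)

lemma xqm2_xqm2 [simp]: "xqm2 (xqm2 z) = (z :: 'a option)"
  by (cases z) (simp_all add: xqm2_eq_map_inverse)

lemma cfrac_single [simp]: "cfrac [a] = (a::'a)"
  by simp

lemma xqm2_comp_xminus: "xqm2 \<circ> xminus a = xinv \<circ> xminus a \<circ> trinf (a::'a)"
  by (auto simp: fun_eq_iff xqm2_eq_map_inverse xminus_def xinv_def mob_def trinf_def
      divide_inverse split: option.split)

lemma chainA_None: "chainA as None = (None :: 'a option)"
  by (induction as rule: rev_induct) (simp_all add: chainA_def xqm2_def xminus_def mob_def)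

lemma inj_chainA: "inj (chainA (as :: 'a list))"
proof (induction as rule: rev_induct)
  case (snoc a as)
  have "inj (xqm2 :: 'a option \<Rightarrow> _)" "inj (xminus a)"
    by (metis injI xqm2_xqm2) (metis injI xplus_xminus)
  with snoc.IH show ?case
    unfolding chainA_snoc by (intro inj_compose)
qed (simp add: chainA_def)

lemma chainA_cfrac_append: "chainA as (Some (cfrac (as @ bs))) = Some (cfrac (bs :: 'a list))"
  by (induction as arbitrary: bs rule: rev_induct)
     (simp_all add: chainA_def xqm2_eq_map_inverse xminus_def mob_def)

lemma chainA_eq_nu0_comp_chainC: "chainA (as :: 'a list) = nu0 as \<circ> chainC (Fmap as)"
proof (induction as rule: rev_induct)
  case Nil
  then show ?case
    by (simp add: chainA_def nu0_def chainC_def Fmap_def)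
next
  case (snoc a as)
  let ?b = "cfrac (as @ [a])"
  have "trinf a \<circ> chainA as = chainA as \<circ> trinf ?b"
    using chainA_cfrac_append[of as "[a]"]
    by (intro trinf_comp_conj inj_chainA chainA_None) simp
  then have "chainA (as @ [a]) = xinv \<circ> xminus a \<circ> chainA as \<circ> trinf ?b"
    by (simp add: chainA_snoc xqm2_comp_xminus comp_assoc)
  also have "\<dots> = nu0 (as @ [a]) \<circ> chainC (Fmap (as @ [a]))"
    unfolding snoc.IH by (simp add: nu0_snoc chainC_snoc Fmap_snoc comp_assoc)
  finally show ?case .
qed

lemma Phi_Fmap: "Phi (Fmap (as :: 'a list)) = Fmap (tl as)"
proof (cases as)
  case (Cons a as')
  show ?thesis
    unfolding Cons Fmap_Cons Phi.simps list.sel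
    by (rule nth_equalityI) (simp_all del: upt_Suc add: Fmap_eq_cfrac_prefixes)
qed (simp add: Fmap_def)

lemma Gmap_Fmap: "Gmap (Fmap (as :: 'a list)) = as"
proof -
  have Phi_pow: "(Phi ^^ m) (Fmap as) = Fmap (drop m as)" for m
    by (induction m) (simp_all add: Phi_Fmap drop_Suc tl_drop)
  have hd_Fmap: "as' \<noteq> [] \<Longrightarrow> hd (Fmap as') = hd as'" for as' :: "'a list"
    by (cases as') (simp_all add: Fmap_Cons)
  show ?thesis
    by (rule nth_equalityI)
       (simp_all del: upt_Suc add: Gmap_def Phi_pow hd_Fmap hd_drop_conv_nth)
qed

lemma Fmap_Gmap: "Fmap (Gmap (bs :: 'a list)) = bs"
proof -
  let ?S = "{as :: 'a list. length as = length bs}"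
  have "finite ?S"
    using finite_lists_length_eq[of "UNIV :: 'a set" "length bs"] by simp
  moreover have "inj_on Fmap ?S"
    by (rule inj_on_inverseI[where g = Gmap]) (rule Gmap_Fmap)
  ultimately have "Fmap ` ?S = ?S"
    by (intro endo_inj_surj) auto
  then obtain as where "bs = Fmap as"
    by (metis (mono_tags, lifting) imageE mem_Collect_eq)
  then show ?thesis
    by (simp add: Gmap_Fmap)
qed

lemma calF_in_setC: "p \<in> setA \<sigma> k \<Longrightarrow> calF p \<in> setC (\<sigma> :: 'a option \<Rightarrow> _) k"
  by (auto simp: setA_def setC_def calF_def chainA_eq_nu0_comp_chainC comp_assoc
      deg1_comp deg1_nu0)

lemma calG_in_setA: "p \<in> setC \<sigma> k \<Longrightarrow> calG p \<in> setA (\<sigma> :: 'a option \<Rightarrow> _) k"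
proof -
  assume "p \<in> setC \<sigma> k"
  then obtain \<nu> bs where p: "p = (\<nu>, bs)" "deg1 \<nu>" "length bs = k" "\<sigma> = \<nu> \<circ> chainC bs"
    unfolding setC_def by blast
  define as where "as = Gmap bs"
  have "chainC bs = mu0 as \<circ> nu0 as \<circ> chainC (Fmap as)"
    by (simp add: as_def Fmap_Gmap mu0_comp_nu0)
  then have "\<sigma> = (\<nu> \<circ> mu0 as) \<circ> chainA as"
    using p(4) by (simp add: chainA_eq_nu0_comp_chainC comp_assoc)
  moreover have "length as = k"
    using p(3) length_Fmap[of as] by (simp add: as_def Fmap_Gmap)
  ultimately show "calG p \<in> setA \<sigma> k"
    using p by (simp add: calG_def setA_def deg1_comp deg1_mu0 as_def)
qed

lemma calG_calF: "calG (calF p) = (p :: ('a option \<Rightarrow> 'a option) \<times> 'a list)"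
  by (cases p) (simp add: calF_def calG_def Gmap_Fmap comp_assoc nu0_comp_mu0)

lemma calF_calG: "calF (calG p) = (p :: ('a option \<Rightarrow> 'a option) \<times> 'a list)"
  by (cases p) (simp add: calF_def calG_def Fmap_Gmap comp_assoc mu0_comp_nu0)

end

theorem theorem1:
  fixes \<sigma> :: "'a::{field,finite} option \<Rightarrow> 'a option" and k :: nat
  assumes "CARD('a) > 2" and "k \<ge> 1" and "bij \<sigma>"
  shows "(\<forall>p \<in> setA \<sigma> k. calF p \<in> setC \<sigma> k)
    \<and> (\<forall>p \<in> setC \<sigma> k. calG p \<in> setA \<sigma> k)
    \<and> (\<forall>p \<in> setA \<sigma> k. calG (calF p) = p)
    \<and> (\<forall>p \<in> setC \<sigma> k. calF (calG p) = p)
    \<and> bij_betw calF (setA \<sigma> k) (setC \<sigma> k)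
    \<and> bij_betw calG (setC \<sigma> k) (setA \<sigma> k)
    \<and> card (setA \<sigma> k) = card (setC \<sigma> k)"
proof -
  note F = calF_in_setC[OF assms(1)] and G = calG_in_setA[OF assms(1)]
    and GF = calG_calF[OF assms(1)] and FG = calF_calG[OF assms(1)]
  have "bij_betw calF (setA \<sigma> k) (setC \<sigma> k)"
    by (rule bij_betw_byWitness[where f' = calG]) (use F G GF FG in auto)
  moreover have "bij_betw calG (setC \<sigma> k) (setA \<sigma> k)"
    by (rule bij_betw_byWitness[where f' = calF]) (use F G GF FG in auto)
  ultimately show ?thesis
    using F G GF FG bij_betw_same_card by blast
qed

end
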